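(* Let $r>1$ be real and let $a,b\in\mathbb{S}$ be such that the open interval $(\sigma_{-r}(a),\sigma_{-r}(b))$ is a gap of $\sigma_{-r}(\mathbb{S})$. Then $b\in\mathbb{N}$, i.e. $v_p(b)<\infty$ for every prime $p$ and $v_p(b)=0$ for all but finitely many $p$.
   Context: A Steinitz number is a formal product $n=\prod_p p^{\alpha_p}$ over all primes with $\alpha_p\in\mathbb{Z}_{\ge0}\cup\{\infty\}$, $v_p(n)=\alpha_p$; $\mathbb{S}$ is the set of Steinitz numbers, and $\mathbb{N}\subset\mathbb{S}$ consists of those with all exponents finite and almost all zero. $\sigma_{-r}$ is defined on $\mathbb{S}$ multiplicatively by $\sigma_{-r}(p^\alpha)=\sum_{i=0}^\alpha p^{-ri}$ for finite $\alpha$ and $\sigma_{-r}(p^\infty)=\frac1{1-p^{-r}}$. A gap of $\sigma_{-r}(\mathbb{S})$ is a bounded connected component of $\mathbb{R}\setminus\sigma_{-r}(\mathbb{S})$. *)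

theory Defs
  imports "HOL-Analysis.Analysis" "HOL-Computational_Algebra.Primes" "HOL-Library.Extended_Nat"
begin

text \<open>A Steinitz number is represented by its exponent function p \<mapsto> v_p(n),
  with values in nat extended by infinity; exponents at non-primes are forced to be 0.\<close>
type_synonym steinitz = "nat \<Rightarrow> enat"

definition Steinitz :: "steinitz set" where
  "Steinitz = {n. \<forall>p. \<not> prime p \<longrightarrow> n p = 0}"

definition SteinitzNat :: "steinitz set" where
  "SteinitzNat = {n \<in> Steinitz. (\<forall>p. n p \<noteq> \<infinity>) \<and> finite {p. n p \<noteq> 0}}"

definition sigma_pp :: "real \<Rightarrow> nat \<Rightarrow> enat \<Rightarrow> real" where
  "sigma_pp r p \<alpha> = (case \<alpha> of
      enat k \<Rightarrow> (\<Sum>i\<le>k. real p powr (- r * real i))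
    | \<infinity> \<Rightarrow> 1 / (1 - real p powr (- r)))"

definition sigma :: "real \<Rightarrow> steinitz \<Rightarrow> real" where
  "sigma r n = (\<Prod>p. if prime p then sigma_pp r p (n p) else 1)"

end

theory Submission
  imports Defs
begin

text \<open>If \<open>b\<close> is not an ordinary natural number, then either some exponent \<open>v\<^sub>p(b)\<close> is
  infinite or infinitely many exponents are positive. Lowering an infinite exponent to a
  large finite one, or discarding all primes beyond a large bound, produces Steinitz numbers
  \<open>c\<close> with \<open>\<sigma>(c) < \<sigma>(b)\<close> arbitrarily close to \<open>\<sigma>(b)\<close>, where \<open>\<sigma> = \<sigma>\<^sub>-\<^sub>r\<close>.
  So \<open>\<sigma>(b)\<close> is a limit from below of values of \<open>\<sigma>\<close> and cannot be the right end of a gap.\<close>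

definition sigma_factor :: "real \<Rightarrow> steinitz \<Rightarrow> nat \<Rightarrow> real" where
  "sigma_factor r n p = (if prime p then sigma_pp r p (n p) else 1)"

lemma sigma_eq_prodinf: "sigma r n = prodinf (sigma_factor r n)"
  unfolding sigma_def sigma_factor_def ..

lemma prime_powr_neg_bounds:
  assumes "prime (p::nat)" "r > 0"
  shows "0 < real p powr - r" "real p powr - r < 1"
  using assms prime_gt_1_nat[OF assms(1)] by (auto intro: powr_less_one)

lemma prime_powr_neg_le_half:
  assumes "prime (p::nat)" "r \<ge> 1"
  shows "real p powr - r \<le> 1/2"
proof -
  have p: "real p \<ge> 2" using prime_ge_2_nat[OF assms(1)] by linarith
  then have "real p powr - r \<le> real p powr - 1"
    using assms(2) by (intro powr_mono) auto
  also have "\<dots> = 1 / real p" using p by (simp add: powr_minus_divide)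
  also have "\<dots> \<le> 1/2" using p by simp
  finally show ?thesis .
qed

lemma sigma_pp_zero: "prime (p::nat) \<Longrightarrow> sigma_pp r p 0 = 1"
  unfolding sigma_pp_def by (simp add: zero_enat_def)

lemma sigma_pp_infinity: "sigma_pp r p \<infinity> = 1 / (1 - real p powr - r)"
  unfolding sigma_pp_def by simp

lemma sigma_pp_enat:
  assumes "prime (p::nat)" "r > 0"
  shows "sigma_pp r p (enat k) = (1 - (real p powr - r) ^ Suc k) / (1 - real p powr - r)"
proof -
  have "sigma_pp r p (enat k) = (\<Sum>i\<le>k. (real p powr - r) ^ i)"
    unfolding sigma_pp_def using prime_gt_0_nat[OF assms(1)]
    by (simp add: powr_realpow[symmetric] powr_powr mult.commute)
  also have "\<dots> = (1 - (real p powr - r) ^ Suc k) / (1 - real p powr - r)"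
    using prime_powr_neg_bounds[OF assms] by (subst sum_gp0) auto
  finally show ?thesis .
qed

lemma sigma_pp_enat_eq:
  assumes "prime (p::nat)" "r > 0"
  shows "sigma_pp r p (enat k) = (1 - (real p powr - r) ^ Suc k) * sigma_pp r p \<infinity>"
  by (simp add: sigma_pp_enat[OF assms] sigma_pp_infinity)

lemma sigma_pp_gt_1:
  assumes "prime (p::nat)" "r > 0" "\<alpha> \<noteq> 0"
  shows "1 < sigma_pp r p \<alpha>"
proof (cases \<alpha>)
  case (enat k)
  define x where "x = real p powr - r"
  have x: "0 < x" "x < 1" using prime_powr_neg_bounds[OF assms(1,2)] by (auto simp: x_def)
  have "k \<ge> 1" using assms(3) enat by (cases k) (auto simp: zero_enat_def)
  then have "x ^ Suc k < x ^ 1" using x by (intro power_strict_decreasing) auto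
  then show ?thesis
    using x by (simp add: enat sigma_pp_enat[OF assms(1,2)] x_def[symmetric] less_divide_eq)
next
  case infinity
  then show ?thesis
    using prime_powr_neg_bounds[OF assms(1,2)] by (simp add: sigma_pp_infinity divide_simps)
qed

lemma sigma_pp_ge_1: "prime (p::nat) \<Longrightarrow> r > 0 \<Longrightarrow> 1 \<le> sigma_pp r p \<alpha>"
  using sigma_pp_gt_1[of p r \<alpha>] sigma_pp_zero[of p r] by (cases "\<alpha> = 0") auto

lemma sigma_pp_le_infinity:
  assumes "prime (p::nat)" "r > 0"
  shows "sigma_pp r p \<alpha> \<le> sigma_pp r p \<infinity>"
proof (cases \<alpha>)
  case (enat k)
  have "0 \<le> sigma_pp r p \<infinity>" using sigma_pp_ge_1[OF assms] by (rule order_trans[rotated]) simp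
  moreover have "0 < (real p powr - r) ^ Suc k" using prime_powr_neg_bounds[OF assms] by simp
  ultimately have "0 \<le> (real p powr - r) ^ Suc k * sigma_pp r p \<infinity>" by simp
  then show ?thesis
    by (simp only: enat sigma_pp_enat_eq[OF assms] left_diff_distrib)
qed simp

lemma sigma_factor_ge_1: "r > 0 \<Longrightarrow> 1 \<le> sigma_factor r n p"
  unfolding sigma_factor_def using sigma_pp_ge_1 by auto

text \<open>Each factor exceeds 1 by at most \<open>1/(1 - x) - 1 \<le> 2x\<close> with \<open>x = p\<^sup>-\<^sup>r \<le> 1/2\<close>, and
  \<open>\<Sum> p\<^sup>-\<^sup>r\<close> converges.\<close>
lemma convergent_prod_sigma_factor:
  assumes "r > 1"
  shows "convergent_prod (sigma_factor r n)"
proof -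
  have excess: "\<bar>sigma_factor r n p - 1\<bar> \<le> 2 * real p powr - r" for p
  proof (cases "prime p")
    case True
    define x where "x = real p powr - r"
    have x: "0 < x" "x \<le> 1/2"
      using prime_powr_neg_bounds[OF True, of r] prime_powr_neg_le_half[OF True, of r] assms
      unfolding x_def by auto
    have "sigma_factor r n p \<le> 1 / (1 - x)"
      using sigma_pp_le_infinity[OF True] True assms
      by (simp add: sigma_factor_def sigma_pp_infinity x_def)
    also have "\<dots> \<le> 1 + 2 * x"
      using x by (simp add: field_simps)
    finally show ?thesis using sigma_factor_ge_1[of r n p] assms x_def by simp
  qed (simp add: sigma_factor_def)
  have "summable (\<lambda>p. 2 * real p powr - r)"
    using assms by (intro summable_mult) (simp add: summable_real_powr_iff)
  then have "summable (\<lambda>p. \<bar>sigma_factor r n p - 1\<bar>)"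
    by (rule summable_comparison_test'[where N = 0]) (use excess in auto)
  moreover have "sigma_factor r n p - 1 \<noteq> -1" for p
    using sigma_factor_ge_1[of r n p] assms by linarith
  ultimately have "convergent_prod (\<lambda>p. 1 + (sigma_factor r n p - 1))"
    by (rule summable_imp_convergent_prod_real)
  then show ?thesis by simp
qed

lemma sigma_has_prod: "r > 1 \<Longrightarrow> sigma_factor r n has_prod sigma r n"
  using convergent_prod_sigma_factor by (simp add: sigma_eq_prodinf convergent_prod_has_prod)

lemma sigma_ge_1: "r > 1 \<Longrightarrow> 1 \<le> sigma r n"
  unfolding sigma_eq_prodinf
  by (rule prodinf_nonneg[OF convergent_prod_has_prod[OF convergent_prod_sigma_factor]])
     (auto intro: sigma_factor_ge_1)

lemma sigma_lower_infinite_exponent: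
  assumes "r > 1" "prime p" "b p = \<infinity>"
  shows "sigma r (b(p := enat k)) = (1 - (real p powr - r) ^ Suc k) * sigma r b"
proof -
  define g where "g = (\<lambda>q. if q = p then 1 - (real p powr - r) ^ Suc k else 1)"
  have "sigma_factor r (b(p := enat k)) = (\<lambda>q. g q * sigma_factor r b q)"
    using assms by (auto simp: sigma_factor_def g_def sigma_pp_enat_eq)
  moreover have "g has_prod (1 - (real p powr - r) ^ Suc k)"
    using has_prod_finite[of "{p}" g] by (simp add: g_def)
  ultimately have "sigma_factor r (b(p := enat k))
      has_prod ((1 - (real p powr - r) ^ Suc k) * sigma r b)"
    using has_prod_mult[OF _ sigma_has_prod[OF assms(1)]] by simp
  then show ?thesis by (simp add: sigma_eq_prodinf has_prod_iff)
qed

lemma sigma_truncate: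
  "sigma r (\<lambda>p. if p \<le> N then b p else 0) = (\<Prod>p\<le>N. sigma_factor r b p)"
  unfolding sigma_eq_prodinf
  by (subst prodinf_finite[of "{..N}"]) (auto simp: sigma_factor_def sigma_pp_zero intro!: prod.cong)

lemma sigma_truncate_less:
  assumes "r > 1" "prime q" "q > N" "b q \<noteq> 0"
  shows "sigma r (\<lambda>p. if p \<le> N then b p else 0) < sigma r b"
  unfolding sigma_eq_prodinf
proof (rule has_prod_less)
  let ?c = "\<lambda>p. if p \<le> N then b p else 0"
  show "sigma_factor r ?c q < sigma_factor r b q"
    using assms sigma_pp_gt_1[of q r "b q"] by (simp add: sigma_factor_def sigma_pp_zero)
  show "sigma_factor r ?c p \<le> sigma_factor r b p" for p
    using sigma_factor_ge_1[of r b p] assms(1)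
    by (auto simp: sigma_factor_def sigma_pp_zero)
  show "0 < sigma_factor r ?c p" for p
    using sigma_factor_ge_1[of r ?c p] assms(1) by simp
qed (use sigma_has_prod[OF assms(1)] in \<open>simp_all add: sigma_eq_prodinf\<close>)

lemma sigma_approx_from_below:
  assumes r: "r > 1" and b: "b \<in> Steinitz" "b \<notin> SteinitzNat" and "e > 0"
  obtains c where "c \<in> Steinitz" "sigma r b - e < sigma r c" "sigma r c < sigma r b"
proof (cases "\<exists>p. b p = \<infinity>")
  case True
  then obtain p where bp: "b p = \<infinity>" by blast
  have p: "prime p" using b bp by (auto simp: Steinitz_def zero_enat_def)
  define x where "x = real p powr - r"
  have x: "0 < x" "x < 1" using prime_powr_neg_bounds[OF p, of r] r unfolding x_def by auto
  have sb: "1 \<le> sigma r b" using sigma_ge_1[OF r] .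
  obtain k where k: "x ^ k < e / sigma r b"
    using real_arch_pow_inv[of "e / sigma r b" x] x sb \<open>e > 0\<close> by auto
  have "x ^ Suc k * sigma r b \<le> x ^ k * sigma r b"
    using x sb by (intro mult_right_mono power_decreasing) auto
  also have "\<dots> < e" using k sb by (simp add: field_simps)
  finally have "x ^ Suc k * sigma r b < e" .
  moreover have "0 < x ^ Suc k * sigma r b" using sb x by simp
  moreover have "b(p := enat k) \<in> Steinitz" using b p by (auto simp: Steinitz_def)
  ultimately show ?thesis
    using that sigma_lower_infinite_exponent[of r p b k, OF r p bp]
    by (simp add: x_def[symmetric] algebra_simps)
next
  case False
  then have "infinite {p. b p \<noteq> 0}" using b by (auto simp: SteinitzNat_def)
  have partial_products: "(\<lambda>N. \<Prod>p\<le>N. sigma_factor r b p) \<longlonglongrightarrow> sigma r b"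
    unfolding sigma_eq_prodinf by (rule convergent_prod_LIMSEQ[OF convergent_prod_sigma_factor[OF r]])
  obtain N where N: "\<bar>(\<Prod>p\<le>N. sigma_factor r b p) - sigma r b\<bar> < e"
    using LIMSEQ_D[OF partial_products \<open>e > 0\<close>] by auto
  obtain q where q: "q > N" "b q \<noteq> 0"
    using \<open>infinite {p. b p \<noteq> 0}\<close> finite_atMost[of N] finite_subset not_le
    by (metis (mono_tags, lifting) atMost_iff mem_Collect_eq subsetI)
  have "prime q" using b q by (auto simp: Steinitz_def)
  have "(\<lambda>p. if p \<le> N then b p else 0) \<in> Steinitz" using b by (auto simp: Steinitz_def)
  then show ?thesis
    using that N sigma_truncate[of r N b] sigma_truncate_less[of r q N b, OF r \<open>prime q\<close> q] by auto
qed

theorem mainTheorem17: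
  fixes r :: real and a b :: steinitz
  assumes "r > 1"
    and "a \<in> Steinitz" and "b \<in> Steinitz"
    and "{sigma r a <..< sigma r b} \<in> components (- (sigma r ` Steinitz))"
    and "bounded {sigma r a <..< sigma r b}"
  shows "b \<in> SteinitzNat"
proof (rule ccontr)
  assume "b \<notin> SteinitzNat"
  have gap: "{sigma r a <..< sigma r b} \<inter> sigma r ` Steinitz = {}"
    using in_components_subset[OF assms(4)] by blast
  have "sigma r a < sigma r b"
    using in_components_nonempty[OF assms(4)] by simp
  then obtain c where "c \<in> Steinitz" "sigma r a < sigma r c" "sigma r c < sigma r b"
    using sigma_approx_from_below[OF assms(1,3) \<open>b \<notin> SteinitzNat\<close>, of "sigma r b - sigma r a"]
    by auto
  then show False using gap by auto
qed

end
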